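(* Let $A$ be a finite group. (1) Suppose $G$ is a finite group containing $A$ and an element $c$ of order $n$ such that $A\cap\langle c\rangle=\{1_G\}$ and $G=A\langle c\rangle$. For each $x\in A$ there are unique $\varphi(x)\in A$ and $\Pi(x)\in\mathbb{Z}_n$ with $cx=\varphi(x)c^{\Pi(x)}$. Then $\varphi$ is a skew-morphism of $A$ and $\Pi:A\to\mathbb{Z}_n$ is an extended power function of $\varphi$. (2) Conversely, let $\varphi$ be a skew-morphism of $A$ and let $\Pi:A\to\mathbb{Z}_n$ be an extended power function of $\varphi$, where $n$ is a positive multiple of the order of $\varphi$. Then there is a finite group $G=A\langle c\rangle$ with $c$ of order $n$, $A\cap\langle c\rangle=\{1\}$, such that the skew-morphism determined by the equations $cx=\varphi'(x)c^{\Pi'(x)}$ ($x\in A$) is $\varphi'=\varphi$. (3) Moreover, let $(\varphi_i,\Pi_i)$, $i=1,2$, be two pairs, each consisting of a skew-morphism $\varphi_i$ of $A$ and an extended power function $\Pi_i:A\to\mathbb{Z}_n$ of $\varphi_i$, and let $A\langle c_i\rangle$ be the corresponding groups as in (2) (so that $c_ix=\varphi_i(x)c_i^{\Pi_i(x)}$ for all $x\in A$). Then there exists a group isomorphism $\Theta:A\langle c_1\rangle\to A\langle c_2\rangle$ with $\Theta(A)=A$ and $\Theta(c_1)=c_2$ if and only if there is an automorphism $\theta$ of $A$ such that $\varphi_2=\theta\varphi_1\theta^{-1}$ and $\Pi_2=\Pi_1\circ\theta^{-1}$.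
   Context: A skew-morphism of a finite group $A$ is a permutation $\varphi$ of $A$ with $\varphi(1_A)=1_A$ for which there is a function $\pi:A\to\mathbb{Z}_m$, where $m$ is the order of $\varphi$ as a permutation, such that $\varphi(xy)=\varphi(x)\varphi^{\pi(x)}(y)$ for all $x,y\in A$; $\pi$ is called the power function of $\varphi$. For a function $f$ on $A$ with integer (or residue) values, the derived function is $\sigma_f(x,0)=0$ and $\sigma_f(x,k)=\sum_{i=1}^{k}f(\varphi^{i-1}(x))$ for integers $k>0$. For a positive multiple $n$ of $m$, a function $\Pi:A\to\mathbb{Z}_n$ is an extended power function of $\varphi$ if: (a) $\Pi(x)\equiv\pi(x)\pmod m$ for all $x\in A$; (b) $\Pi(1_A)\equiv1\pmod n$; (c) $\Pi(xy)\equiv\sum_{i=1}^{\Pi(x)}\Pi(\varphi^{i-1}(y))\pmod n$ for all $x,y\in A$ (with $\Pi(x)$ represented by a nonnegative integer). *)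

theory Defs
  imports "HOL-Algebra.Algebra"
begin

definition perm_order :: "('a, 'b) monoid_scheme \<Rightarrow> ('a \<Rightarrow> 'a) \<Rightarrow> nat" where
  "perm_order A \<phi> = (LEAST k. 0 < k \<and> (\<forall>x\<in>carrier A. (\<phi> ^^ k) x = x))"

(* pi is a power function of phi, with values in Z_m represented by {0..<m} *)
definition power_function :: "('a, 'b) monoid_scheme \<Rightarrow> ('a \<Rightarrow> 'a) \<Rightarrow> ('a \<Rightarrow> nat) \<Rightarrow> bool" where
  "power_function A \<phi> \<pi> \<longleftrightarrow>
     (\<forall>x\<in>carrier A. \<pi> x < perm_order A \<phi>) \<and>
     (\<forall>x\<in>carrier A. \<forall>y\<in>carrier A.
        \<phi> (x \<otimes>\<^bsub>A\<^esub> y) = \<phi> x \<otimes>\<^bsub>A\<^esub> (\<phi> ^^ \<pi> x) y)"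

definition skew_morphism :: "('a, 'b) monoid_scheme \<Rightarrow> ('a \<Rightarrow> 'a) \<Rightarrow> bool" where
  "skew_morphism A \<phi> \<longleftrightarrow>
     bij_betw \<phi> (carrier A) (carrier A) \<and> \<phi> \<one>\<^bsub>A\<^esub> = \<one>\<^bsub>A\<^esub> \<and>
     (\<exists>\<pi>. power_function A \<phi> \<pi>)"

(* Pi : A -> Z_n (values represented in {0..<n}) is an extended power function of phi *)
definition ext_power_function ::
  "('a, 'b) monoid_scheme \<Rightarrow> ('a \<Rightarrow> 'a) \<Rightarrow> nat \<Rightarrow> ('a \<Rightarrow> nat) \<Rightarrow> bool" where
  "ext_power_function A \<phi> n P \<longleftrightarrow>
     0 < n \<and> perm_order A \<phi> dvd n \<and>
     (\<forall>x\<in>carrier A. P x < n) \<and>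
     (\<exists>\<pi>. power_function A \<phi> \<pi> \<and>
        (\<forall>x\<in>carrier A. P x mod perm_order A \<phi> = \<pi> x)) \<and>
     P \<one>\<^bsub>A\<^esub> mod n = 1 mod n \<and>
     (\<forall>x\<in>carrier A. \<forall>y\<in>carrier A.
        P (x \<otimes>\<^bsub>A\<^esub> y) mod n = (\<Sum>i<P x. P ((\<phi> ^^ i) y)) mod n)"

definition skew_product :: "('a, 'b) monoid_scheme \<Rightarrow> ('g, 'h) monoid_scheme \<Rightarrow>
    ('a \<Rightarrow> 'g) \<Rightarrow> 'g \<Rightarrow> nat \<Rightarrow> bool" where
  "skew_product A G \<iota> c n \<longleftrightarrow>
     group G \<and> finite (carrier G) \<and>
     \<iota> \<in> hom A G \<and> inj_on \<iota> (carrier A) \<and>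
     c \<in> carrier G \<and> group.ord G c = n \<and>
     \<iota> ` carrier A \<inter> generate G {c} = {\<one>\<^bsub>G\<^esub>} \<and>
     carrier G = \<iota> ` carrier A <#>\<^bsub>G\<^esub> generate G {c}"

definition skew_relation :: "('a, 'b) monoid_scheme \<Rightarrow> ('g, 'h) monoid_scheme \<Rightarrow>
    ('a \<Rightarrow> 'g) \<Rightarrow> 'g \<Rightarrow> nat \<Rightarrow> ('a \<Rightarrow> 'a) \<Rightarrow> ('a \<Rightarrow> nat) \<Rightarrow> bool" where
  "skew_relation A G \<iota> c n \<phi> P \<longleftrightarrow>
     (\<forall>x\<in>carrier A. \<phi> x \<in> carrier A \<and> P x < n \<and>
        c \<otimes>\<^bsub>G\<^esub> \<iota> x = \<iota> (\<phi> x) \<otimes>\<^bsub>G\<^esub> c [^]\<^bsub>G\<^esub> P x)"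

end

(*
  In G = A<c> with A \<inter> <c> = 1 and c of order n, every element has a unique normal form
  \<iota>(a) c^k with a \<in> A and k < n.  Iterating the commutation rule c \<iota>(x) = \<iota>(\<phi> x) c^(\<Pi> x)
  gives c^k \<iota>(x) = \<iota>(\<phi>^k x) c^(\<sigma>(x, k)), where \<sigma> is the orbit sum of \<Pi> along \<phi>, so normal
  forms multiply by (a, k)(b, l) = (a \<phi>^k(b), \<sigma>(b, k) + l mod n).  Computing the normal form
  of c \<iota>(x y) in two ways yields the skew-morphism identity for \<phi> and the defining identity of
  an extended power function for \<Pi>.

  Conversely, for a skew morphism with an extended power function the same rule is an
  associative multiplication on A \<times> Z_n: associativity reduces to \<sigma>(x y, i) = \<sigma>(y, \<sigma>(x, i))
  and to \<sigma>(x, n) = 0 modulo n, the latter because the order of \<phi> divides both n and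
  \<sigma>(x, ord \<phi>).  A finite cancellative monoid is a group, and (1, 1) realises (\<phi>, \<Pi>).

  An isomorphism fixing A setwise and mapping c1 to c2 restricts to an automorphism \<theta> of A
  that conjugates (\<phi>1, \<Pi>1) into (\<phi>2, \<Pi>2); conversely such a \<theta> induces the isomorphism
  \<iota>1(a) c1^k \<mapsto> \<iota>2(\<theta> a) c2^k, which respects the multiplication rule.
*)
theory Submission
  imports Defs
begin

section \<open>Orbit sums and permutations of a finite carrier\<close>

definition orbit_sum :: "('a \<Rightarrow> nat) \<Rightarrow> ('a \<Rightarrow> 'a) \<Rightarrow> 'a \<Rightarrow> nat \<Rightarrow> nat" where
  "orbit_sum f \<phi> x k = (\<Sum>i<k. f ((\<phi> ^^ i) x))"

lemma orbit_sum_0 [simp]: "orbit_sum f \<phi> x 0 = 0"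
  by (simp add: orbit_sum_def)

lemma orbit_sum_Suc: "orbit_sum f \<phi> x (Suc k) = orbit_sum f \<phi> x k + f ((\<phi> ^^ k) x)"
  by (simp add: orbit_sum_def)

lemma orbit_sum_1 [simp]: "orbit_sum f \<phi> x 1 = f x"
  by (simp add: orbit_sum_def)

lemma orbit_sum_add:
  "orbit_sum f \<phi> x (a + b) = orbit_sum f \<phi> x a + orbit_sum f \<phi> ((\<phi> ^^ a) x) b"
proof (induction b)
  case (Suc b)
  have "(\<phi> ^^ (a + b)) x = (\<phi> ^^ b) ((\<phi> ^^ a) x)"
    by (metis add.commute comp_apply funpow_add)
  with Suc show ?case
    by (simp add: orbit_sum_Suc)
qed simp

lemma orbit_sum_mult_period:
  assumes "(\<phi> ^^ p) x = x"
  shows "orbit_sum f \<phi> x (p * q) = q * orbit_sum f \<phi> x p"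
  by (induction q) (simp_all add: orbit_sum_add assms)

lemma funpow_mod_period:
  assumes "(\<phi> ^^ p) x = x"
  shows "(\<phi> ^^ (k mod p)) x = (\<phi> ^^ k) x"
proof -
  have "(\<phi> ^^ (p * q)) x = x" for q
    by (induction q) (simp_all add: funpow_add assms)
  then show ?thesis
    by (metis comp_apply funpow_add mod_mult_div_eq)
qed

lemma (in monoid) group_of_finite_left_cancel:
  assumes "finite (carrier G)"
    and left_cancel: "\<And>a b b'. \<lbrakk>a \<in> carrier G; b \<in> carrier G; b' \<in> carrier G; a \<otimes> b = a \<otimes> b'\<rbrakk> \<Longrightarrow> b = b'"
  shows "group G"
proof -
  have right_inv: "\<exists>b\<in>carrier G. a \<otimes> b = \<one>" if a: "a \<in> carrier G" for a
  proof -
    have "(\<otimes>) a ` carrier G = carrier G"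
      by (rule endo_inj_surj) (use assms a in \<open>auto intro: inj_onI\<close>)
    then show ?thesis
      by (metis imageE one_closed)
  qed
  show ?thesis
  proof (rule group_l_invI)
    fix a assume a: "a \<in> carrier G"
    then obtain b where b: "b \<in> carrier G" "a \<otimes> b = \<one>"
      using right_inv by blast
    then obtain d where d: "d \<in> carrier G" "b \<otimes> d = \<one>"
      using right_inv by blast
    have "d = a"
      using a b d by (metis l_one m_assoc r_one)
    with b d show "\<exists>b\<in>carrier G. b \<otimes> a = \<one>"
      by blast
  qed
qed

locale carrier_perm =
  fixes A :: "('a, 'b) monoid_scheme" and \<phi> :: "'a \<Rightarrow> 'a"
  assumes finite_carrier: "finite (carrier A)"
    and bij: "bij_betw \<phi> (carrier A) (carrier A)"
begin

lemma funpow_closed: "x \<in> carrier A \<Longrightarrow> (\<phi> ^^ k) x \<in> carrier A"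
  using bij_betw_apply[OF bij_betw_funpow[OF bij]] .

lemma inj_on_funpow: "inj_on (\<phi> ^^ k) (carrier A)"
  using bij_betw_funpow[OF bij] by (rule bij_betw_imp_inj_on)

lemma funpow_period_exists: "\<exists>k>0. \<forall>x\<in>carrier A. (\<phi> ^^ k) x = x"
proof -
  let ?p = "restrict_id \<phi> (carrier A)"
  have "permutation ?p"
    using permutes_restrict_id[OF bij] finite_carrier permutation_permutes by blast
  then obtain k where "?p ^^ k = id" "k > 0"
    by (rule permutation_is_nilpotent)
  moreover have "(?p ^^ j) x = (\<phi> ^^ j) x" if "x \<in> carrier A" for x j
    using that by (induction j) (simp_all add: funpow_closed)
  ultimately show ?thesis
    by (metis id_apply)
qed

lemma perm_order_pos: "0 < perm_order A \<phi>"
  and funpow_perm_order: "x \<in> carrier A \<Longrightarrow> (\<phi> ^^ perm_order A \<phi>) x = x"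
  using LeastI_ex[OF funpow_period_exists] by (simp_all add: perm_order_def)

lemma perm_order_dvd:
  assumes "\<And>x. x \<in> carrier A \<Longrightarrow> (\<phi> ^^ k) x = x"
  shows "perm_order A \<phi> dvd k"
proof (rule ccontr)
  assume "\<not> perm_order A \<phi> dvd k"
  then have "0 < k mod perm_order A \<phi>"
    by (simp add: dvd_eq_mod_eq_0)
  moreover have "(\<phi> ^^ (k mod perm_order A \<phi>)) x = x" if "x \<in> carrier A" for x
    using that assms funpow_mod_period[OF funpow_perm_order] by metis
  ultimately have "perm_order A \<phi> \<le> k mod perm_order A \<phi>"
    unfolding perm_order_def by (intro Least_le) auto
  then show False
    using perm_order_pos by (meson leD mod_less_divisor)
qed

end

section \<open>Normal forms in a skew product group\<close>

locale skew_product_group = A: group A + G: group G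
  for A :: "('a, 'b) monoid_scheme" and G :: "('g, 'h) monoid_scheme" +
  fixes \<iota> :: "'a \<Rightarrow> 'g" and c :: 'g and n :: nat
  assumes skew_product: "skew_product A G \<iota> c n"
begin

lemma finite_G: "finite (carrier G)"
  and iota_hom: "\<iota> \<in> hom A G"
  and inj_iota: "inj_on \<iota> (carrier A)"
  and c_closed: "c \<in> carrier G"
  and ord_c: "G.ord c = n"
  and iota_inter_cyclic: "\<iota> ` carrier A \<inter> generate G {c} = {\<one>\<^bsub>G\<^esub>}"
  and carrier_G: "carrier G = \<iota> ` carrier A <#>\<^bsub>G\<^esub> generate G {c}"
  using skew_product unfolding skew_product_def by auto

sublocale iota: group_hom A G \<iota>
  by (simp add: group_hom_def group_hom_axioms_def A.group_axioms G.group_axioms iota_hom)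

lemma finite_A: "finite (carrier A)"
proof -
  have "\<iota> ` carrier A \<subseteq> carrier G"
    by auto
  then show ?thesis
    using finite_G inj_iota by (metis finite_imageD finite_subset)
qed

lemma n_pos: "0 < n"
  using G.ord_ge_1[OF finite_G c_closed] ord_c by simp

lemma c_pow_eq_iff: "c [^]\<^bsub>G\<^esub> (k::nat) = c [^]\<^bsub>G\<^esub> (l::nat) \<longleftrightarrow> k mod n = l mod n"
proof -
  have "c [^]\<^bsub>G\<^esub> k = c [^]\<^bsub>G\<^esub> l \<longleftrightarrow> c [^]\<^bsub>G\<^esub> int k = c [^]\<^bsub>G\<^esub> int l"
    by (simp add: int_pow_int)
  also have "\<dots> \<longleftrightarrow> int n dvd int l - int k"
    using G.int_pow_eq[OF c_closed] ord_c by simp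
  also have "\<dots> \<longleftrightarrow> k mod n = l mod n"
    by (metis mod_eq_dvd_iff of_nat_eq_iff of_nat_mod)
  finally show ?thesis .
qed

lemma c_pow_mod: "c [^]\<^bsub>G\<^esub> (k mod n) = c [^]\<^bsub>G\<^esub> k"
  by (simp add: c_pow_eq_iff)

lemma c_pow_in_cyclic: "c [^]\<^bsub>G\<^esub> (k::nat) \<in> generate G {c}"
  using G.generate_pow_on_finite_carrier[OF finite_G c_closed] by blast

lemma iota_in_cyclic_imp_one: "\<lbrakk>a \<in> carrier A; \<iota> a \<in> generate G {c}\<rbrakk> \<Longrightarrow> a = \<one>\<^bsub>A\<^esub>"
  using iota_inter_cyclic inj_iota by (metis A.one_closed iota.hom_one IntI imageI inj_onD singletonD)

lemma normal_form_eq_iff: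
  assumes a: "a \<in> carrier A" and b: "b \<in> carrier A"
  shows "\<iota> a \<otimes>\<^bsub>G\<^esub> c [^]\<^bsub>G\<^esub> (k::nat) = \<iota> b \<otimes>\<^bsub>G\<^esub> c [^]\<^bsub>G\<^esub> (l::nat) \<longleftrightarrow> a = b \<and> k mod n = l mod n"
proof
  assume eq: "\<iota> a \<otimes>\<^bsub>G\<^esub> c [^]\<^bsub>G\<^esub> k = \<iota> b \<otimes>\<^bsub>G\<^esub> c [^]\<^bsub>G\<^esub> l"
  have "\<iota> (inv\<^bsub>A\<^esub> b \<otimes>\<^bsub>A\<^esub> a)
      = inv\<^bsub>G\<^esub> (\<iota> b) \<otimes>\<^bsub>G\<^esub> (\<iota> a \<otimes>\<^bsub>G\<^esub> c [^]\<^bsub>G\<^esub> k) \<otimes>\<^bsub>G\<^esub> inv\<^bsub>G\<^esub> (c [^]\<^bsub>G\<^esub> k)"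
    using a b c_closed by (simp add: G.m_assoc)
  also have "\<dots> = c [^]\<^bsub>G\<^esub> l \<otimes>\<^bsub>G\<^esub> inv\<^bsub>G\<^esub> (c [^]\<^bsub>G\<^esub> k)"
    using a b c_closed by (simp add: eq G.m_assoc[symmetric])
  also have "\<dots> \<in> generate G {c}"
    using G.generate_is_subgroup[of "{c}"] c_closed c_pow_in_cyclic
    by (simp add: subgroup.m_closed subgroup.m_inv_closed)
  finally have "inv\<^bsub>A\<^esub> b \<otimes>\<^bsub>A\<^esub> a = \<one>\<^bsub>A\<^esub>"
    using a b by (simp add: iota_in_cyclic_imp_one)
  then have "inv\<^bsub>A\<^esub> a = inv\<^bsub>A\<^esub> b"
    using a b by (intro A.inv_equality) auto
  then have "a = b"
    using a b by (metis A.inv_inv)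
  moreover have "c [^]\<^bsub>G\<^esub> k = c [^]\<^bsub>G\<^esub> l"
    using eq b c_closed unfolding \<open>a = b\<close> by simp
  ultimately show "a = b \<and> k mod n = l mod n"
    by (simp add: c_pow_eq_iff)
next
  assume "a = b \<and> k mod n = l mod n"
  then show "\<iota> a \<otimes>\<^bsub>G\<^esub> c [^]\<^bsub>G\<^esub> k = \<iota> b \<otimes>\<^bsub>G\<^esub> c [^]\<^bsub>G\<^esub> l"
    using c_pow_eq_iff[of k l] by simp
qed

lemma normal_form_exists:
  assumes "g \<in> carrier G"
  obtains a k where "a \<in> carrier A" "k < n" "g = \<iota> a \<otimes>\<^bsub>G\<^esub> c [^]\<^bsub>G\<^esub> k"
proof -
  obtain h t where h: "h \<in> \<iota> ` carrier A" and t: "t \<in> generate G {c}" and "g = h \<otimes>\<^bsub>G\<^esub> t"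
    using assms carrier_G unfolding set_mult_def by blast
  moreover obtain a where "a \<in> carrier A" "h = \<iota> a"
    using h by blast
  moreover obtain k :: nat where "t = c [^]\<^bsub>G\<^esub> k"
    using t G.generate_pow_on_finite_carrier[OF finite_G c_closed] by blast
  ultimately show thesis
    using that[of a "k mod n"] n_pos by (simp add: c_pow_mod)
qed

lemma bij_betw_normal_form:
  "bij_betw (\<lambda>(a, k). \<iota> a \<otimes>\<^bsub>G\<^esub> c [^]\<^bsub>G\<^esub> k) (carrier A \<times> {..<n}) (carrier G)"
proof (rule bij_betw_imageI)
  show "inj_on (\<lambda>(a, k). \<iota> a \<otimes>\<^bsub>G\<^esub> c [^]\<^bsub>G\<^esub> k) (carrier A \<times> {..<n})"
  proof (rule inj_onI)
    fix p q
    assume "p \<in> carrier A \<times> {..<n}" "q \<in> carrier A \<times> {..<n}"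
      and "(\<lambda>(a, k). \<iota> a \<otimes>\<^bsub>G\<^esub> c [^]\<^bsub>G\<^esub> k) p = (\<lambda>(a, k). \<iota> a \<otimes>\<^bsub>G\<^esub> c [^]\<^bsub>G\<^esub> k) q"
    then show "p = q"
      using normal_form_eq_iff[of "fst p" "fst q" "snd p" "snd q"]
      by (simp add: case_prod_beta mem_Times_iff prod_eq_iff)
  qed
  show "(\<lambda>(a, k). \<iota> a \<otimes>\<^bsub>G\<^esub> c [^]\<^bsub>G\<^esub> k) ` (carrier A \<times> {..<n}) = carrier G"
  proof (intro equalityI subsetI)
    fix g assume "g \<in> carrier G"
    then obtain a k where "a \<in> carrier A" "k < n" "g = \<iota> a \<otimes>\<^bsub>G\<^esub> c [^]\<^bsub>G\<^esub> k"
      by (rule normal_form_exists)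
    then show "g \<in> (\<lambda>(a, k). \<iota> a \<otimes>\<^bsub>G\<^esub> c [^]\<^bsub>G\<^esub> k) ` (carrier A \<times> {..<n})"
      by force
  qed (use c_closed in auto)
qed

lemma ex1_normal_form:
  assumes "g \<in> carrier G"
  shows "\<exists>!p. fst p \<in> carrier A \<and> snd p < n \<and> g = \<iota> (fst p) \<otimes>\<^bsub>G\<^esub> c [^]\<^bsub>G\<^esub> snd p"
proof -
  obtain a k where ak: "a \<in> carrier A" "k < n" "g = \<iota> a \<otimes>\<^bsub>G\<^esub> c [^]\<^bsub>G\<^esub> k"
    using normal_form_exists[OF assms] .
  show ?thesis
  proof (rule ex1I[of _ "(a, k)"])
    fix p assume p: "fst p \<in> carrier A \<and> snd p < n \<and> g = \<iota> (fst p) \<otimes>\<^bsub>G\<^esub> c [^]\<^bsub>G\<^esub> snd p"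
    then have "fst p = a \<and> snd p mod n = k mod n"
      using ak normal_form_eq_iff[of "fst p" a "snd p" k] by simp
    then show "p = (a, k)"
      using p ak(2) by (simp add: prod_eq_iff)
  qed (use ak in simp)
qed

end

lemma skew_product_groupI:
  assumes "group A" and "skew_product A G \<iota> c n"
  shows "skew_product_group A G \<iota> c n"
proof (intro skew_product_group.intro skew_product_group_axioms.intro)
  show "group G"
    using assms(2) unfolding skew_product_def by (elim conjE)
qed fact+

locale skew_product_relation = skew_product_group +
  fixes \<phi> :: "'a \<Rightarrow> 'a" and P :: "'a \<Rightarrow> nat"
  assumes skew_relation: "skew_relation A G \<iota> c n \<phi> P"
begin

lemma phi_closed: "x \<in> carrier A \<Longrightarrow> \<phi> x \<in> carrier A"
  and P_less: "x \<in> carrier A \<Longrightarrow> P x < n"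
  and c_iota: "x \<in> carrier A \<Longrightarrow> c \<otimes>\<^bsub>G\<^esub> \<iota> x = \<iota> (\<phi> x) \<otimes>\<^bsub>G\<^esub> c [^]\<^bsub>G\<^esub> P x"
  using skew_relation unfolding skew_relation_def by auto

lemma funpow_phi_closed: "x \<in> carrier A \<Longrightarrow> (\<phi> ^^ k) x \<in> carrier A"
  by (induction k) (simp_all add: phi_closed)

lemma c_pow_iota:
  assumes x: "x \<in> carrier A"
  shows "c [^]\<^bsub>G\<^esub> (k::nat) \<otimes>\<^bsub>G\<^esub> \<iota> x = \<iota> ((\<phi> ^^ k) x) \<otimes>\<^bsub>G\<^esub> c [^]\<^bsub>G\<^esub> orbit_sum P \<phi> x k"
proof (induction k)
  case (Suc k)
  let ?y = "(\<phi> ^^ k) x" and ?s = "orbit_sum P \<phi> x k"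
  have y: "?y \<in> carrier A"
    using funpow_phi_closed[OF x] .
  have "c [^]\<^bsub>G\<^esub> Suc k \<otimes>\<^bsub>G\<^esub> \<iota> x = c \<otimes>\<^bsub>G\<^esub> (c [^]\<^bsub>G\<^esub> k \<otimes>\<^bsub>G\<^esub> \<iota> x)"
    unfolding G.nat_pow_Suc2[OF c_closed] using c_closed x by (simp add: G.m_assoc)
  also have "\<dots> = (c \<otimes>\<^bsub>G\<^esub> \<iota> ?y) \<otimes>\<^bsub>G\<^esub> c [^]\<^bsub>G\<^esub> ?s"
    using Suc c_closed y by (simp add: G.m_assoc)
  also have "\<dots> = \<iota> (\<phi> ?y) \<otimes>\<^bsub>G\<^esub> c [^]\<^bsub>G\<^esub> (P ?y + ?s)"
    using c_closed y phi_closed[OF y] by (simp add: c_iota G.m_assoc G.nat_pow_mult)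
  finally show ?case
    by (simp add: orbit_sum_Suc add.commute)
qed (simp add: x)

lemma normal_form_mult:
  assumes a: "a \<in> carrier A" and b: "b \<in> carrier A"
  shows "(\<iota> a \<otimes>\<^bsub>G\<^esub> c [^]\<^bsub>G\<^esub> (k::nat)) \<otimes>\<^bsub>G\<^esub> (\<iota> b \<otimes>\<^bsub>G\<^esub> c [^]\<^bsub>G\<^esub> (l::nat))
    = \<iota> (a \<otimes>\<^bsub>A\<^esub> (\<phi> ^^ k) b) \<otimes>\<^bsub>G\<^esub> c [^]\<^bsub>G\<^esub> ((orbit_sum P \<phi> b k + l) mod n)"
proof -
  have "(\<iota> a \<otimes>\<^bsub>G\<^esub> c [^]\<^bsub>G\<^esub> k) \<otimes>\<^bsub>G\<^esub> (\<iota> b \<otimes>\<^bsub>G\<^esub> c [^]\<^bsub>G\<^esub> l)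
      = \<iota> a \<otimes>\<^bsub>G\<^esub> (c [^]\<^bsub>G\<^esub> k \<otimes>\<^bsub>G\<^esub> \<iota> b) \<otimes>\<^bsub>G\<^esub> c [^]\<^bsub>G\<^esub> l"
    using a b c_closed by (simp add: G.m_assoc)
  also have "\<dots> = \<iota> (a \<otimes>\<^bsub>A\<^esub> (\<phi> ^^ k) b) \<otimes>\<^bsub>G\<^esub> c [^]\<^bsub>G\<^esub> (orbit_sum P \<phi> b k + l)"
    using a b c_closed funpow_phi_closed[OF b]
    by (simp add: c_pow_iota G.m_assoc G.nat_pow_mult)
  finally show ?thesis
    by (simp add: c_pow_mod)
qed

lemma c_iota_mult:
  assumes x: "x \<in> carrier A" and y: "y \<in> carrier A"
  shows "\<iota> (\<phi> (x \<otimes>\<^bsub>A\<^esub> y)) \<otimes>\<^bsub>G\<^esub> c [^]\<^bsub>G\<^esub> P (x \<otimes>\<^bsub>A\<^esub> y)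
    = \<iota> (\<phi> x \<otimes>\<^bsub>A\<^esub> (\<phi> ^^ P x) y) \<otimes>\<^bsub>G\<^esub> c [^]\<^bsub>G\<^esub> (orbit_sum P \<phi> y (P x) mod n)"
proof -
  have "\<iota> (\<phi> (x \<otimes>\<^bsub>A\<^esub> y)) \<otimes>\<^bsub>G\<^esub> c [^]\<^bsub>G\<^esub> P (x \<otimes>\<^bsub>A\<^esub> y) = c \<otimes>\<^bsub>G\<^esub> \<iota> (x \<otimes>\<^bsub>A\<^esub> y)"
    by (rule c_iota[OF A.m_closed[OF x y], symmetric])
  also have "\<dots> = c \<otimes>\<^bsub>G\<^esub> \<iota> x \<otimes>\<^bsub>G\<^esub> \<iota> y"
    using x y c_closed by (simp add: G.m_assoc)
  also have "\<dots> = (\<iota> (\<phi> x) \<otimes>\<^bsub>G\<^esub> c [^]\<^bsub>G\<^esub> P x) \<otimes>\<^bsub>G\<^esub> (\<iota> y \<otimes>\<^bsub>G\<^esub> c [^]\<^bsub>G\<^esub> (0::nat))"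
    using x y by (simp add: c_iota)
  also have "\<dots> = \<iota> (\<phi> x \<otimes>\<^bsub>A\<^esub> (\<phi> ^^ P x) y) \<otimes>\<^bsub>G\<^esub> c [^]\<^bsub>G\<^esub> ((orbit_sum P \<phi> y (P x) + 0) mod n)"
    by (rule normal_form_mult[OF phi_closed[OF x] y])
  finally show ?thesis
    by simp
qed

lemma phi_mult_and_P_mult:
  assumes x: "x \<in> carrier A" and y: "y \<in> carrier A"
  shows "\<phi> (x \<otimes>\<^bsub>A\<^esub> y) = \<phi> x \<otimes>\<^bsub>A\<^esub> (\<phi> ^^ P x) y \<and> P (x \<otimes>\<^bsub>A\<^esub> y) = orbit_sum P \<phi> y (P x) mod n"
proof -
  have xy: "x \<otimes>\<^bsub>A\<^esub> y \<in> carrier A" and "\<phi> x \<otimes>\<^bsub>A\<^esub> (\<phi> ^^ P x) y \<in> carrier A"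
    using x y by (simp_all add: phi_closed funpow_phi_closed)
  from normal_form_eq_iff[OF phi_closed[OF xy] this(2), THEN iffD1, OF c_iota_mult[OF x y]]
  show ?thesis
    using P_less[OF xy] by simp
qed

lemma phi_one_and_P_one: "\<phi> \<one>\<^bsub>A\<^esub> = \<one>\<^bsub>A\<^esub> \<and> P \<one>\<^bsub>A\<^esub> = 1 mod n"
proof -
  have "\<iota> (\<phi> \<one>\<^bsub>A\<^esub>) \<otimes>\<^bsub>G\<^esub> c [^]\<^bsub>G\<^esub> P \<one>\<^bsub>A\<^esub> = \<iota> \<one>\<^bsub>A\<^esub> \<otimes>\<^bsub>G\<^esub> c [^]\<^bsub>G\<^esub> (1::nat)"
    using c_iota[of "\<one>\<^bsub>A\<^esub>"] c_closed by simp
  from normal_form_eq_iff[OF phi_closed[OF A.one_closed] A.one_closed, THEN iffD1, OF this]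
  show ?thesis
    using P_less[of "\<one>\<^bsub>A\<^esub>"] by simp
qed

lemma inj_on_phi: "inj_on \<phi> (carrier A)"
proof (rule inj_onI)
  \<comment> \<open>right multiplication by \<open>c [^] (n - P x)\<close> absorbs the power of \<open>c\<close>, so \<open>\<phi> x\<close> determines \<open>x\<close>\<close>
  have shift: "c \<otimes>\<^bsub>G\<^esub> (\<iota> x \<otimes>\<^bsub>G\<^esub> c [^]\<^bsub>G\<^esub> (n - P x)) = \<iota> (\<phi> x) \<otimes>\<^bsub>G\<^esub> c [^]\<^bsub>G\<^esub> n"
    if x: "x \<in> carrier A" for x
  proof -
    have "c \<otimes>\<^bsub>G\<^esub> (\<iota> x \<otimes>\<^bsub>G\<^esub> c [^]\<^bsub>G\<^esub> (n - P x)) = (c \<otimes>\<^bsub>G\<^esub> \<iota> x) \<otimes>\<^bsub>G\<^esub> c [^]\<^bsub>G\<^esub> (n - P x)"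
      using x c_closed by (simp add: G.m_assoc)
    also have "\<dots> = \<iota> (\<phi> x) \<otimes>\<^bsub>G\<^esub> (c [^]\<^bsub>G\<^esub> P x \<otimes>\<^bsub>G\<^esub> c [^]\<^bsub>G\<^esub> (n - P x))"
      using x c_closed phi_closed[OF x] by (simp add: c_iota G.m_assoc)
    also have "\<dots> = \<iota> (\<phi> x) \<otimes>\<^bsub>G\<^esub> c [^]\<^bsub>G\<^esub> n"
      using c_closed P_less[OF x] by (simp add: G.nat_pow_mult)
    finally show ?thesis .
  qed
  fix x y assume x: "x \<in> carrier A" and y: "y \<in> carrier A" and "\<phi> x = \<phi> y"
  then have "c \<otimes>\<^bsub>G\<^esub> (\<iota> x \<otimes>\<^bsub>G\<^esub> c [^]\<^bsub>G\<^esub> (n - P x)) = c \<otimes>\<^bsub>G\<^esub> (\<iota> y \<otimes>\<^bsub>G\<^esub> c [^]\<^bsub>G\<^esub> (n - P y))"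
    using shift by simp
  then have "\<iota> x \<otimes>\<^bsub>G\<^esub> c [^]\<^bsub>G\<^esub> (n - P x) = \<iota> y \<otimes>\<^bsub>G\<^esub> c [^]\<^bsub>G\<^esub> (n - P y)"
    using x y c_closed by simp
  then show "x = y"
    using normal_form_eq_iff[OF x y] by simp
qed

lemma bij_phi: "bij_betw \<phi> (carrier A) (carrier A)"
  using endo_inj_surj[OF finite_A _ inj_on_phi] phi_closed inj_on_phi
  by (simp add: bij_betw_def image_subsetI)

lemma funpow_phi_n: "x \<in> carrier A \<Longrightarrow> (\<phi> ^^ n) x = x"
proof -
  assume x: "x \<in> carrier A"
  have "\<iota> ((\<phi> ^^ n) x) \<otimes>\<^bsub>G\<^esub> c [^]\<^bsub>G\<^esub> orbit_sum P \<phi> x n = \<iota> x \<otimes>\<^bsub>G\<^esub> c [^]\<^bsub>G\<^esub> (0::nat)"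
    using c_pow_iota[OF x, of n] x c_closed funpow_phi_closed[OF x] G.pow_ord_eq_1[OF c_closed]
    by (simp add: ord_c)
  from normal_form_eq_iff[OF funpow_phi_closed[OF x] x, THEN iffD1, OF this]
  show ?thesis
    by simp
qed

sublocale carrier_perm A \<phi>
  using finite_A bij_phi by unfold_locales

lemma power_function_P_mod: "power_function A \<phi> (\<lambda>x. P x mod perm_order A \<phi>)"
  unfolding power_function_def
  using perm_order_pos phi_mult_and_P_mult funpow_mod_period[OF funpow_perm_order] by simp

lemma skew_morphism: "skew_morphism A \<phi>"
  unfolding skew_morphism_def using bij_phi phi_one_and_P_one power_function_P_mod by blast

lemma ext_power_function: "ext_power_function A \<phi> n P"
  unfolding ext_power_function_def
  using n_pos perm_order_dvd[OF funpow_phi_n] P_less power_function_P_mod phi_one_and_P_one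
    phi_mult_and_P_mult
  by (auto simp: orbit_sum_def)

end

lemma skew_product_ex1_normal_form:
  assumes "group A" and "skew_product A G \<iota> c n" and "x \<in> carrier A"
  shows "\<exists>!p. fst p \<in> carrier A \<and> snd p < n \<and> c \<otimes>\<^bsub>G\<^esub> \<iota> x = \<iota> (fst p) \<otimes>\<^bsub>G\<^esub> c [^]\<^bsub>G\<^esub> snd p"
proof -
  interpret skew_product_group A G \<iota> c n
    using assms(1,2) by (rule skew_product_groupI)
  show ?thesis
    using assms(3) c_closed by (simp add: ex1_normal_form)
qed

lemma skew_relation_imp_skew_morphism:
  assumes "group A" and "skew_product A G \<iota> c n" and "skew_relation A G \<iota> c n \<phi> P"
  shows "skew_morphism A \<phi> \<and> ext_power_function A \<phi> n P"
proof -
  interpret skew_product_relation A G \<iota> c n \<phi> P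
    using assms by (intro skew_product_relation.intro skew_product_groupI skew_product_relation_axioms.intro)
  show ?thesis
    using skew_morphism ext_power_function by blast
qed

section \<open>Realising a skew morphism by a skew product\<close>

(* (x, i) stands for x c^i; the product follows the rule c^i y = \<phi>^i(y) c^(\<sigma>_P(y, i)). *)
definition skew_product_monoid ::
    "('a, 'b) monoid_scheme \<Rightarrow> ('a \<Rightarrow> 'a) \<Rightarrow> nat \<Rightarrow> ('a \<Rightarrow> nat) \<Rightarrow> ('a \<times> nat) monoid" where
  "skew_product_monoid A \<phi> n P =
    \<lparr>carrier = carrier A \<times> {..<n},
     monoid.mult = (\<lambda>(x, i) (y, j). (x \<otimes>\<^bsub>A\<^esub> (\<phi> ^^ i) y, (orbit_sum P \<phi> y i + j) mod n)),
     one = (\<one>\<^bsub>A\<^esub>, 0)\<rparr>"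

locale ext_skew_morphism = group A + carrier_perm A \<phi>
  for A :: "('a, 'b) monoid_scheme" (structure) and \<phi> +
  fixes n :: nat and P :: "'a \<Rightarrow> nat"
  assumes phi_one: "\<phi> \<one> = \<one>"
    and n_pos: "0 < n"
    and perm_order_dvd_n: "perm_order A \<phi> dvd n"
    and P_less: "x \<in> carrier A \<Longrightarrow> P x < n"
    and phi_mult: "\<lbrakk>x \<in> carrier A; y \<in> carrier A\<rbrakk> \<Longrightarrow> \<phi> (x \<otimes> y) = \<phi> x \<otimes> (\<phi> ^^ P x) y"
    and P_one: "P \<one> = 1 mod n"
    and P_mult: "\<lbrakk>x \<in> carrier A; y \<in> carrier A\<rbrakk> \<Longrightarrow>
      P (x \<otimes> y) mod n = orbit_sum P \<phi> y (P x) mod n"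
begin

abbreviation S :: "('a \<times> nat) monoid" where
  "S \<equiv> skew_product_monoid A \<phi> n P"

lemma funpow_n: "x \<in> carrier A \<Longrightarrow> (\<phi> ^^ n) x = x"
  using funpow_mod_period[OF funpow_perm_order, of x n] perm_order_dvd_n by simp

lemma funpow_mod_n: "x \<in> carrier A \<Longrightarrow> (\<phi> ^^ (k mod n)) x = (\<phi> ^^ k) x"
  using funpow_mod_period[OF funpow_n] .

lemma funpow_one: "(\<phi> ^^ k) \<one> = \<one>"
  by (induction k) (simp_all add: phi_one)

lemma funpow_skew_mult:
  assumes x: "x \<in> carrier A" and y: "y \<in> carrier A"
  shows "(\<phi> ^^ k) (x \<otimes> y) = (\<phi> ^^ k) x \<otimes> (\<phi> ^^ orbit_sum P \<phi> x k) y"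
proof (induction k)
  case (Suc k)
  have "(\<phi> ^^ Suc k) (x \<otimes> y) = \<phi> ((\<phi> ^^ k) x \<otimes> (\<phi> ^^ orbit_sum P \<phi> x k) y)"
    using Suc by simp
  also have "\<dots> = (\<phi> ^^ Suc k) x \<otimes> (\<phi> ^^ P ((\<phi> ^^ k) x)) ((\<phi> ^^ orbit_sum P \<phi> x k) y)"
    using x y by (simp add: phi_mult funpow_closed)
  also have "(\<phi> ^^ P ((\<phi> ^^ k) x)) ((\<phi> ^^ orbit_sum P \<phi> x k) y) = (\<phi> ^^ orbit_sum P \<phi> x (Suc k)) y"
    by (simp add: orbit_sum_Suc funpow_add add.commute)
  finally show ?case .
qed simp

lemma perm_order_dvd_orbit_sum:
  assumes x: "x \<in> carrier A"
  shows "perm_order A \<phi> dvd orbit_sum P \<phi> x (perm_order A \<phi>)"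
proof (rule perm_order_dvd)
  fix y assume y: "y \<in> carrier A"
  have "x \<otimes> y = x \<otimes> (\<phi> ^^ orbit_sum P \<phi> x (perm_order A \<phi>)) y"
    using funpow_skew_mult[OF x y, of "perm_order A \<phi>"] x y by (simp add: funpow_perm_order)
  then show "(\<phi> ^^ orbit_sum P \<phi> x (perm_order A \<phi>)) y = y"
    using x y by (metis l_cancel funpow_closed)
qed

lemma n_dvd_orbit_sum_n:
  assumes x: "x \<in> carrier A"
  shows "n dvd orbit_sum P \<phi> x n"
proof -
  obtain q where q: "n = perm_order A \<phi> * q"
    using perm_order_dvd_n by blast
  have "orbit_sum P \<phi> x n = q * orbit_sum P \<phi> x (perm_order A \<phi>)"
    unfolding q by (rule orbit_sum_mult_period[OF funpow_perm_order[OF x]])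
  then show ?thesis
    using perm_order_dvd_orbit_sum[OF x] q by (simp add: mult.commute)
qed

lemma orbit_sum_mod_n:
  assumes x: "x \<in> carrier A"
  shows "orbit_sum P \<phi> x (k mod n) mod n = orbit_sum P \<phi> x k mod n"
proof -
  let ?y = "(\<phi> ^^ (k mod n)) x"
  have "orbit_sum P \<phi> x k = orbit_sum P \<phi> x (k mod n + n * (k div n))"
    by simp
  also have "\<dots> = orbit_sum P \<phi> x (k mod n) + orbit_sum P \<phi> ?y (n * (k div n))"
    by (rule orbit_sum_add)
  also have "orbit_sum P \<phi> ?y (n * (k div n)) = k div n * orbit_sum P \<phi> ?y n"
    by (rule orbit_sum_mult_period[OF funpow_n[OF funpow_closed[OF x]]])
  also obtain t where "orbit_sum P \<phi> ?y n = n * t"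
    using n_dvd_orbit_sum_n[OF funpow_closed[OF x]] by blast
  finally have "orbit_sum P \<phi> x k = orbit_sum P \<phi> x (k mod n) + n * (k div n * t)"
    by simp
  then show ?thesis
    by simp
qed

lemma orbit_sum_one: "orbit_sum P \<phi> \<one> k mod n = k mod n"
proof -
  have "orbit_sum P \<phi> \<one> k = k * (1 mod n)"
    by (induction k) (simp_all add: orbit_sum_Suc funpow_one P_one)
  then show ?thesis
    by (simp add: mod_mult_right_eq)
qed

lemma orbit_sum_mult:
  assumes x: "x \<in> carrier A" and y: "y \<in> carrier A"
  shows "orbit_sum P \<phi> (x \<otimes> y) i mod n = orbit_sum P \<phi> y (orbit_sum P \<phi> x i) mod n"
proof (induction i)
  case (Suc i)
  let ?s = "orbit_sum P \<phi> x i" and ?x' = "(\<phi> ^^ i) x"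
  have "P ((\<phi> ^^ i) (x \<otimes> y)) mod n = P (?x' \<otimes> (\<phi> ^^ ?s) y) mod n"
    by (simp add: funpow_skew_mult x y)
  also have "\<dots> = orbit_sum P \<phi> ((\<phi> ^^ ?s) y) (P ?x') mod n"
    using x y by (simp add: P_mult funpow_closed)
  finally have "P ((\<phi> ^^ i) (x \<otimes> y)) mod n = orbit_sum P \<phi> ((\<phi> ^^ ?s) y) (P ?x') mod n" .
  from mod_add_cong[OF Suc.IH this]
  show ?case
    by (simp only: orbit_sum_Suc orbit_sum_add)
qed simp

lemma S_simps [simp]:
  "carrier S = carrier A \<times> {..<n}"
  "\<one>\<^bsub>S\<^esub> = (\<one>, 0)"
  "(x, i) \<otimes>\<^bsub>S\<^esub> (y, j) = (x \<otimes> (\<phi> ^^ i) y, (orbit_sum P \<phi> y i + j) mod n)"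
  by (simp_all add: skew_product_monoid_def)

lemma S_assoc:
  assumes x: "x \<in> carrier A" and y: "y \<in> carrier A" and z: "z \<in> carrier A"
  shows "((x, i) \<otimes>\<^bsub>S\<^esub> (y, j)) \<otimes>\<^bsub>S\<^esub> (z, k) = (x, i) \<otimes>\<^bsub>S\<^esub> ((y, j) \<otimes>\<^bsub>S\<^esub> (z, k))"
proof -
  define s where "s = orbit_sum P \<phi> y i"
  define w where "w = (\<phi> ^^ j) z"
  have w: "w \<in> carrier A"
    using z by (simp add: w_def funpow_closed)
  have "(\<phi> ^^ ((s + j) mod n)) z = (\<phi> ^^ s) w"
    using z by (simp add: funpow_mod_n w_def funpow_add)
  then have first: "x \<otimes> (\<phi> ^^ i) y \<otimes> (\<phi> ^^ ((s + j) mod n)) z = x \<otimes> (\<phi> ^^ i) (y \<otimes> w)"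
    using x y w by (simp add: funpow_skew_mult s_def m_assoc funpow_closed)
  have "orbit_sum P \<phi> z ((s + j) mod n) mod n = orbit_sum P \<phi> z (j + s) mod n"
    using orbit_sum_mod_n[OF z] by (simp add: add.commute)
  also have "\<dots> = (orbit_sum P \<phi> w s + orbit_sum P \<phi> z j) mod n"
    by (simp add: orbit_sum_add w_def add.commute)
  also have "\<dots> = (orbit_sum P \<phi> (y \<otimes> w) i + orbit_sum P \<phi> z j) mod n"
    by (rule mod_add_cong) (simp_all add: orbit_sum_mult y w s_def)
  finally have second: "(orbit_sum P \<phi> z ((s + j) mod n) + k) mod n
      = (orbit_sum P \<phi> (y \<otimes> w) i + (orbit_sum P \<phi> z j + k) mod n) mod n"
    by (metis add.assoc mod_add_left_eq mod_add_right_eq)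
  show ?thesis
    using first second by (simp add: s_def w_def)
qed

lemma S_monoid: "monoid S"
proof
  show "a \<otimes>\<^bsub>S\<^esub> b \<in> carrier S" if "a \<in> carrier S" "b \<in> carrier S" for a b
    using that n_pos by (auto simp: funpow_closed)
  show "a \<otimes>\<^bsub>S\<^esub> b \<otimes>\<^bsub>S\<^esub> d = a \<otimes>\<^bsub>S\<^esub> (b \<otimes>\<^bsub>S\<^esub> d)"
    if "a \<in> carrier S" "b \<in> carrier S" "d \<in> carrier S" for a b d
    using that S_assoc by auto
  show "\<one>\<^bsub>S\<^esub> \<in> carrier S"
    using n_pos by simp
  show "\<one>\<^bsub>S\<^esub> \<otimes>\<^bsub>S\<^esub> a = a" if "a \<in> carrier S" for a
    using that by auto
  show "a \<otimes>\<^bsub>S\<^esub> \<one>\<^bsub>S\<^esub> = a" if "a \<in> carrier S" for a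
    using that orbit_sum_one by (auto simp: funpow_one)
qed

lemma S_left_cancel:
  assumes "a \<in> carrier S" "b \<in> carrier S" "b' \<in> carrier S" "a \<otimes>\<^bsub>S\<^esub> b = a \<otimes>\<^bsub>S\<^esub> b'"
  shows "b = b'"
proof -
  obtain x i y j y' j' where ab: "a = (x, i)" "b = (y, j)" "b' = (y', j')"
    by (cases a, cases b, cases b') blast
  then have in_A: "x \<in> carrier A" "y \<in> carrier A" "y' \<in> carrier A" and "j < n" "j' < n"
    using assms by auto
  have "x \<otimes> (\<phi> ^^ i) y = x \<otimes> (\<phi> ^^ i) y'"
    using assms(4) ab by simp
  then have "(\<phi> ^^ i) y = (\<phi> ^^ i) y'"
    using in_A by (simp add: funpow_closed)
  then have "y = y'"
    using inj_on_funpow in_A by (meson inj_onD)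
  moreover have "(orbit_sum P \<phi> y i + j) mod n = (orbit_sum P \<phi> y i + j') mod n"
    using assms(4) ab \<open>y = y'\<close> by simp
  then have "j mod n = j' mod n"
    by (simp add: nat_mod_eq_iff)
  then have "j = j'"
    using \<open>j < n\<close> \<open>j' < n\<close> by simp
  ultimately show ?thesis
    using ab by simp
qed

lemma S_group: "group S"
  using monoid.group_of_finite_left_cancel[OF S_monoid] finite_carrier S_left_cancel by simp

(* 1 mod n rather than 1, so that the generator lies in the carrier also for n = 1. *)
definition generator :: "'a \<times> nat" where
  "generator = (\<one>, 1 mod n)"

lemma S_generator_pow: "generator [^]\<^bsub>S\<^esub> k = (\<one>, k mod n)"
proof (induction k)
  case (Suc k)
  have "(orbit_sum P \<phi> \<one> (k mod n) + 1 mod n) mod n = Suc k mod n"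
    using orbit_sum_one[of "k mod n"] by (metis mod_Suc_eq mod_add_eq mod_mod_trivial Suc_eq_plus1)
  with Suc show ?case
    by (simp add: generator_def funpow_one del: Suc_0_mod_eq)
qed simp

lemma S_generator_closed: "generator \<in> carrier S"
  using n_pos by (simp add: generator_def)

lemma S_generate_generator: "generate S {generator} = {\<one>} \<times> {..<n}"
proof -
  have "generate S {generator} = range (\<lambda>k. (\<one>, k mod n))"
    using group.generate_pow_on_finite_carrier[OF S_group _ S_generator_closed] finite_carrier
    by (auto simp: S_generator_pow)
  also have "\<dots> = {\<one>} \<times> range (\<lambda>k. k mod n)"
    by auto
  also have "\<dots> = {\<one>} \<times> {..<n}"
    using range_mod[OF n_pos] by (simp add: atLeast0LessThan)
  finally show ?thesis .
qed

lemma S_skew_product: "skew_product A S (\<lambda>x. (x, 0)) generator n"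
  unfolding skew_product_def
proof (intro conjI)
  show "(\<lambda>x. (x, 0)) \<in> hom A S"
    using n_pos by (auto intro!: homI simp: funpow_one)
  show "group.ord S generator = n"
    using group.ord_unique[OF S_group S_generator_closed]
    by (simp add: S_generator_pow dvd_eq_mod_eq_0)
  show "(\<lambda>x. (x, 0)) ` carrier A \<inter> generate S {generator} = {\<one>\<^bsub>S\<^esub>}"
    using n_pos by (auto simp: S_generate_generator)
  show "carrier S = (\<lambda>x. (x, 0)) ` carrier A <#>\<^bsub>S\<^esub> generate S {generator}"
    by (auto simp: S_generate_generator set_mult_def image_iff)
qed (simp_all add: S_group finite_carrier S_generator_closed[simplified] inj_on_def)

lemma S_skew_relation: "skew_relation A S (\<lambda>x. (x, 0)) generator n \<phi> P"
  unfolding skew_relation_def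
proof (intro ballI conjI)
  fix x assume x: "x \<in> carrier A"
  show "\<phi> x \<in> carrier A" and "P x < n"
    using x P_less funpow_closed[of x 1] by auto
  have "orbit_sum P \<phi> x (1 mod n) mod n = P x"
    using orbit_sum_mod_n[OF x, of 1] P_less[OF x] by (simp only: orbit_sum_1 mod_less)
  moreover have "(\<phi> ^^ (1 mod n)) x = \<phi> x"
    using funpow_mod_n[OF x, of 1] by simp
  ultimately show "generator \<otimes>\<^bsub>S\<^esub> (x, 0) = (\<phi> x, 0) \<otimes>\<^bsub>S\<^esub> generator [^]\<^bsub>S\<^esub> P x"
    unfolding S_generator_pow using x P_less[OF x] funpow_closed[of x 1] by (simp add: generator_def del: Suc_0_mod_eq)
qed

end

lemma skew_product_from_ext_power_function:
  fixes A :: "('a, 'b) monoid_scheme"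
  assumes "group A" "finite (carrier A)" "skew_morphism A \<phi>" "ext_power_function A \<phi> n P"
  shows "\<exists>(G :: ('a \<times> nat) monoid) \<iota> c. skew_product A G \<iota> c n \<and> skew_relation A G \<iota> c n \<phi> P"
proof -
  obtain \<pi> where \<pi>: "power_function A \<phi> \<pi>" and P_mod: "\<forall>x\<in>carrier A. P x mod perm_order A \<phi> = \<pi> x"
    using assms(4) unfolding ext_power_function_def by blast
  interpret carrier_perm A \<phi>
    using assms(2,3) by unfold_locales (simp_all add: skew_morphism_def)
  interpret ext_skew_morphism A \<phi> n P
  proof (intro ext_skew_morphism.intro ext_skew_morphism_axioms.intro)
    fix x y assume x: "x \<in> carrier A" and y: "y \<in> carrier A"
    \<comment> \<open>\<open>P\<close> reduces to the power function \<open>\<pi>\<close> modulo the order of \<open>\<phi>\<close>\<close>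
    have "(\<phi> ^^ P x) y = (\<phi> ^^ \<pi> x) y"
      using funpow_mod_period[OF funpow_perm_order[OF y]] P_mod x by metis
    then show "\<phi> (x \<otimes>\<^bsub>A\<^esub> y) = \<phi> x \<otimes>\<^bsub>A\<^esub> (\<phi> ^^ P x) y"
      using \<pi> x y by (simp add: power_function_def)
  next
    show "P \<one>\<^bsub>A\<^esub> = 1 mod n"
      using assms(4) by (metis ext_power_function_def mod_less monoid.one_closed[OF group.is_monoid[OF assms(1)]])
  qed (use assms carrier_perm_axioms in \<open>auto simp: ext_power_function_def skew_morphism_def orbit_sum_def\<close>)
  show ?thesis
    using S_skew_product S_skew_relation by blast
qed

section \<open>Isomorphisms of skew products\<close>

lemma funpow_conjugate:
  assumes closed: "\<And>x. x \<in> S \<Longrightarrow> \<phi>1 x \<in> S"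
    and conj: "\<And>x. x \<in> S \<Longrightarrow> \<phi>2 (\<theta> x) = \<theta> (\<phi>1 x)" and y: "y \<in> S"
  shows "\<theta> ((\<phi>1 ^^ k) y) = (\<phi>2 ^^ k) (\<theta> y)"
proof (induction k)
  case (Suc k)
  have "(\<phi>1 ^^ k) y \<in> S"
    using y by (induction k) (simp_all add: closed)
  from conj[OF this] Suc.IH show ?case
    by simp
qed simp

lemma orbit_sum_conjugate:
  assumes closed: "\<And>x. x \<in> S \<Longrightarrow> \<phi>1 x \<in> S"
    and conj: "\<And>x. x \<in> S \<Longrightarrow> \<phi>2 (\<theta> x) = \<theta> (\<phi>1 x)"
    and P_conj: "\<And>x. x \<in> S \<Longrightarrow> P2 (\<theta> x) = P1 x" and y: "y \<in> S"
  shows "orbit_sum P2 \<phi>2 (\<theta> y) k = orbit_sum P1 \<phi>1 y k"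
proof -
  have "(\<phi>1 ^^ i) y \<in> S" for i
    using y by (induction i) (simp_all add: closed)
  then show ?thesis
    unfolding orbit_sum_def
    by (intro sum.cong) (simp_all add: P_conj flip: funpow_conjugate[of S \<phi>1 \<phi>2 \<theta> y, OF closed conj y])
qed

lemma conjugate_by_inv_into_iff:
  assumes "bij_betw \<theta> S S"
  shows "(\<forall>x\<in>S. f2 x = \<theta> (f1 (inv_into S \<theta> x)) \<and> g2 x = g1 (inv_into S \<theta> x))
     \<longleftrightarrow> (\<forall>y\<in>S. f2 (\<theta> y) = \<theta> (f1 y) \<and> g2 (\<theta> y) = g1 y)"
proof -
  have "inv_into S \<theta> (\<theta> y) = y" if "y \<in> S" for y
    using assms that by (simp add: bij_betw_def inv_into_f_f)
  moreover have "inv_into S \<theta> x \<in> S" "\<theta> (inv_into S \<theta> x) = x" if "x \<in> S" for x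
    using assms that by (auto simp: bij_betw_def inv_into_into f_inv_into_f)
  ultimately show ?thesis
    using assms by (metis bij_betwE)
qed

locale skew_product_pair =
  S1: skew_product_relation A G1 \<iota>1 c1 n \<phi>1 P1 + S2: skew_product_relation A G2 \<iota>2 c2 n \<phi>2 P2
  for A :: "('a, 'b) monoid_scheme"
    and G1 :: "('c, 'd) monoid_scheme" and \<iota>1 c1 n \<phi>1 P1
    and G2 :: "('e, 'f) monoid_scheme" and \<iota>2 c2 \<phi>2 P2
begin

lemma induced_automorphism:
  assumes \<Psi>: "\<Psi> \<in> iso G1 G2" and image: "\<Psi> ` \<iota>1 ` carrier A = \<iota>2 ` carrier A"
  defines "\<theta> \<equiv> inv_into (carrier A) \<iota>2 \<circ> (\<Psi> \<circ> \<iota>1)"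
  shows "\<theta> \<in> iso A A" and "\<And>x. x \<in> carrier A \<Longrightarrow> \<iota>2 (\<theta> x) = \<Psi> (\<iota>1 x)"
proof -
  interpret \<Psi>: group_hom G1 G2 \<Psi>
    using \<Psi> by (simp add: group_hom_def group_hom_axioms_def iso_def S1.G.group_axioms S2.G.group_axioms)
  have \<theta>: "\<theta> x \<in> carrier A" "\<iota>2 (\<theta> x) = \<Psi> (\<iota>1 x)" if "x \<in> carrier A" for x
  proof -
    have "\<Psi> (\<iota>1 x) \<in> \<iota>2 ` carrier A"
      using image that by blast
    then show "\<theta> x \<in> carrier A" "\<iota>2 (\<theta> x) = \<Psi> (\<iota>1 x)"
      by (simp_all add: \<theta>_def inv_into_into f_inv_into_f)
  qed
  then show "\<iota>2 (\<theta> x) = \<Psi> (\<iota>1 x)" if "x \<in> carrier A" for x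
    using that by blast
  have "bij_betw \<Psi> (\<iota>1 ` carrier A) (\<iota>2 ` carrier A)"
    using \<Psi> image by (auto simp: iso_def intro: bij_betw_subset)
  with inj_on_imp_bij_betw[OF S1.inj_iota] have "bij_betw (\<Psi> \<circ> \<iota>1) (carrier A) (\<iota>2 ` carrier A)"
    by (rule bij_betw_trans)
  then have "bij_betw \<theta> (carrier A) (carrier A)"
    unfolding \<theta>_def by (rule bij_betw_trans) (rule bij_betw_inv_into[OF inj_on_imp_bij_betw[OF S2.inj_iota]])
  moreover have "\<theta> (x \<otimes>\<^bsub>A\<^esub> y) = \<theta> x \<otimes>\<^bsub>A\<^esub> \<theta> y" if "x \<in> carrier A" "y \<in> carrier A" for x y
  proof -
    have "\<iota>2 (\<theta> (x \<otimes>\<^bsub>A\<^esub> y)) = \<iota>2 (\<theta> x \<otimes>\<^bsub>A\<^esub> \<theta> y)"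
      using that \<theta> by simp
    then show ?thesis
      by (rule inj_onD[OF S2.inj_iota]) (use that \<theta> in auto)
  qed
  ultimately show "\<theta> \<in> iso A A"
    using \<theta> by (auto simp: iso_def intro!: homI)
qed

lemma iso_imp_conjugate:
  assumes \<Psi>: "\<Psi> \<in> iso G1 G2" and image: "\<Psi> ` \<iota>1 ` carrier A = \<iota>2 ` carrier A" and "\<Psi> c1 = c2"
  obtains \<theta> where "\<theta> \<in> iso A A"
    and "\<And>x. x \<in> carrier A \<Longrightarrow> \<phi>2 (\<theta> x) = \<theta> (\<phi>1 x) \<and> P2 (\<theta> x) = P1 x"
proof -
  interpret \<Psi>: group_hom G1 G2 \<Psi>
    using \<Psi> by (simp add: group_hom_def group_hom_axioms_def iso_def S1.G.group_axioms S2.G.group_axioms)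
  define \<theta> where "\<theta> = inv_into (carrier A) \<iota>2 \<circ> (\<Psi> \<circ> \<iota>1)"
  have \<theta>: "\<theta> \<in> iso A A" "\<And>x. x \<in> carrier A \<Longrightarrow> \<iota>2 (\<theta> x) = \<Psi> (\<iota>1 x)"
    using induced_automorphism[OF \<Psi> image] by (simp_all add: \<theta>_def)
  have \<theta>_closed: "\<theta> x \<in> carrier A" if "x \<in> carrier A" for x
    using \<theta>(1) that by (auto simp: iso_def dest: hom_in_carrier)
  have "\<phi>2 (\<theta> x) = \<theta> (\<phi>1 x) \<and> P2 (\<theta> x) = P1 x" if x: "x \<in> carrier A" for x
  proof -
    have "\<iota>2 (\<phi>2 (\<theta> x)) \<otimes>\<^bsub>G2\<^esub> c2 [^]\<^bsub>G2\<^esub> P2 (\<theta> x) = \<Psi> (c1 \<otimes>\<^bsub>G1\<^esub> \<iota>1 x)"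
      using x \<theta> \<theta>_closed S1.c_closed \<open>\<Psi> c1 = c2\<close> by (simp add: S2.c_iota[symmetric])
    also have "\<dots> = \<iota>2 (\<theta> (\<phi>1 x)) \<otimes>\<^bsub>G2\<^esub> c2 [^]\<^bsub>G2\<^esub> P1 x"
      using x \<theta> S1.phi_closed S1.c_closed \<open>\<Psi> c1 = c2\<close> by (simp add: S1.c_iota \<Psi>.hom_nat_pow)
    finally have "\<iota>2 (\<phi>2 (\<theta> x)) \<otimes>\<^bsub>G2\<^esub> c2 [^]\<^bsub>G2\<^esub> P2 (\<theta> x) = \<iota>2 (\<theta> (\<phi>1 x)) \<otimes>\<^bsub>G2\<^esub> c2 [^]\<^bsub>G2\<^esub> P1 x" .
    from S2.normal_form_eq_iff[OF S2.phi_closed[OF \<theta>_closed[OF x]] \<theta>_closed[OF S1.phi_closed[OF x]],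
        THEN iffD1, OF this]
    show ?thesis
      using S1.P_less[OF x] S2.P_less[OF \<theta>_closed[OF x]] by simp
  qed
  with \<theta>(1) show thesis
    using that by blast
qed

lemma conjugate_normal_form_mult:
  assumes \<theta>: "\<theta> \<in> hom A A"
    and conj: "\<And>x. x \<in> carrier A \<Longrightarrow> \<phi>2 (\<theta> x) = \<theta> (\<phi>1 x) \<and> P2 (\<theta> x) = P1 x"
    and a: "a \<in> carrier A" and b: "b \<in> carrier A"
  shows "\<iota>2 (\<theta> (a \<otimes>\<^bsub>A\<^esub> (\<phi>1 ^^ k) b)) \<otimes>\<^bsub>G2\<^esub> c2 [^]\<^bsub>G2\<^esub> ((orbit_sum P1 \<phi>1 b k + l) mod n)
    = (\<iota>2 (\<theta> a) \<otimes>\<^bsub>G2\<^esub> c2 [^]\<^bsub>G2\<^esub> k) \<otimes>\<^bsub>G2\<^esub> (\<iota>2 (\<theta> b) \<otimes>\<^bsub>G2\<^esub> c2 [^]\<^bsub>G2\<^esub> l)"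
proof -
  have "\<theta> ((\<phi>1 ^^ k) b) = (\<phi>2 ^^ k) (\<theta> b)"
    by (rule funpow_conjugate[of "carrier A"]) (use S1.phi_closed conj b in auto)
  then have "\<theta> (a \<otimes>\<^bsub>A\<^esub> (\<phi>1 ^^ k) b) = \<theta> a \<otimes>\<^bsub>A\<^esub> (\<phi>2 ^^ k) (\<theta> b)"
    using \<theta> a b by (simp add: hom_mult S1.funpow_phi_closed)
  moreover have "orbit_sum P1 \<phi>1 b k = orbit_sum P2 \<phi>2 (\<theta> b) k"
    by (rule orbit_sum_conjugate[of "carrier A", symmetric]) (use S1.phi_closed conj b in auto)
  ultimately show ?thesis
    using \<theta> a b by (simp add: S2.normal_form_mult hom_in_carrier del: S2.iota.hom_mult)
qed

lemma normal_form_map_mult: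
  assumes \<theta>: "\<theta> \<in> hom A A"
    and conj: "\<And>x. x \<in> carrier A \<Longrightarrow> \<phi>2 (\<theta> x) = \<theta> (\<phi>1 x) \<and> P2 (\<theta> x) = P1 x"
    and \<Psi>_normal_form: "\<And>a k. \<lbrakk>a \<in> carrier A; k < n\<rbrakk> \<Longrightarrow>
      \<Psi> (\<iota>1 a \<otimes>\<^bsub>G1\<^esub> c1 [^]\<^bsub>G1\<^esub> k) = \<iota>2 (\<theta> a) \<otimes>\<^bsub>G2\<^esub> c2 [^]\<^bsub>G2\<^esub> k"
    and "g \<in> carrier G1" "h \<in> carrier G1"
  shows "\<Psi> (g \<otimes>\<^bsub>G1\<^esub> h) = \<Psi> g \<otimes>\<^bsub>G2\<^esub> \<Psi> h"
proof -
  obtain a k where a: "a \<in> carrier A" "k < n" and g: "g = \<iota>1 a \<otimes>\<^bsub>G1\<^esub> c1 [^]\<^bsub>G1\<^esub> k"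
    using S1.normal_form_exists[OF \<open>g \<in> carrier G1\<close>] .
  obtain b l where b: "b \<in> carrier A" "l < n" and h: "h = \<iota>1 b \<otimes>\<^bsub>G1\<^esub> c1 [^]\<^bsub>G1\<^esub> l"
    using S1.normal_form_exists[OF \<open>h \<in> carrier G1\<close>] .
  have "\<Psi> (g \<otimes>\<^bsub>G1\<^esub> h)
      = \<iota>2 (\<theta> (a \<otimes>\<^bsub>A\<^esub> (\<phi>1 ^^ k) b)) \<otimes>\<^bsub>G2\<^esub> c2 [^]\<^bsub>G2\<^esub> ((orbit_sum P1 \<phi>1 b k + l) mod n)"
    unfolding g h S1.normal_form_mult[OF a(1) b(1)]
    using a b S1.n_pos by (intro \<Psi>_normal_form) (simp_all add: S1.funpow_phi_closed)
  also have "\<dots> = \<Psi> g \<otimes>\<^bsub>G2\<^esub> \<Psi> h"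
    unfolding g h \<Psi>_normal_form[OF a] \<Psi>_normal_form[OF b]
    using \<theta> conj a(1) b(1) by (rule conjugate_normal_form_mult)
  finally show ?thesis .
qed

lemma normal_form_transfer:
  assumes bij_\<theta>: "bij_betw \<theta> (carrier A) (carrier A)"
  defines "\<Psi> \<equiv> (\<lambda>(a, k). \<iota>2 a \<otimes>\<^bsub>G2\<^esub> c2 [^]\<^bsub>G2\<^esub> k) \<circ> map_prod \<theta> id
      \<circ> inv_into (carrier A \<times> {..<n}) (\<lambda>(a, k). \<iota>1 a \<otimes>\<^bsub>G1\<^esub> c1 [^]\<^bsub>G1\<^esub> k)"
  shows "bij_betw \<Psi> (carrier G1) (carrier G2)"
    and "\<And>a k. \<lbrakk>a \<in> carrier A; k < n\<rbrakk> \<Longrightarrow>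
      \<Psi> (\<iota>1 a \<otimes>\<^bsub>G1\<^esub> c1 [^]\<^bsub>G1\<^esub> k) = \<iota>2 (\<theta> a) \<otimes>\<^bsub>G2\<^esub> c2 [^]\<^bsub>G2\<^esub> k"
proof -
  show "bij_betw \<Psi> (carrier G1) (carrier G2)"
    unfolding \<Psi>_def
    by (intro bij_betw_trans[OF bij_betw_inv_into[OF S1.bij_betw_normal_form]]
        bij_betw_trans[OF bij_betw_map_prod[OF bij_\<theta> bij_betw_id]] S2.bij_betw_normal_form)
  show "\<Psi> (\<iota>1 a \<otimes>\<^bsub>G1\<^esub> c1 [^]\<^bsub>G1\<^esub> k) = \<iota>2 (\<theta> a) \<otimes>\<^bsub>G2\<^esub> c2 [^]\<^bsub>G2\<^esub> k"
    if "a \<in> carrier A" "k < n" for a k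
    using inv_into_f_f[OF bij_betw_imp_inj_on[OF S1.bij_betw_normal_form], of "(a, k)"] that
    by (simp add: \<Psi>_def)
qed

lemma conjugate_imp_iso:
  assumes \<theta>: "\<theta> \<in> iso A A"
    and conj: "\<And>x. x \<in> carrier A \<Longrightarrow> \<phi>2 (\<theta> x) = \<theta> (\<phi>1 x) \<and> P2 (\<theta> x) = P1 x"
  shows "\<exists>\<Psi>. \<Psi> \<in> iso G1 G2 \<and> \<Psi> ` \<iota>1 ` carrier A = \<iota>2 ` carrier A \<and> \<Psi> c1 = c2"
proof -
  have bij_\<theta>: "bij_betw \<theta> (carrier A) (carrier A)"
    using \<theta> by (simp add: iso_def)
  define \<Psi> where "\<Psi> = (\<lambda>(a, k). \<iota>2 a \<otimes>\<^bsub>G2\<^esub> c2 [^]\<^bsub>G2\<^esub> k) \<circ> map_prod \<theta> id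
      \<circ> inv_into (carrier A \<times> {..<n}) (\<lambda>(a, k). \<iota>1 a \<otimes>\<^bsub>G1\<^esub> c1 [^]\<^bsub>G1\<^esub> k)"
  note bij_\<Psi> = normal_form_transfer(1)[OF bij_\<theta>, folded \<Psi>_def]
    and \<Psi>_normal_form = normal_form_transfer(2)[OF bij_\<theta>, folded \<Psi>_def]
  have "\<Psi> (g \<otimes>\<^bsub>G1\<^esub> h) = \<Psi> g \<otimes>\<^bsub>G2\<^esub> \<Psi> h" if "g \<in> carrier G1" "h \<in> carrier G1" for g h
    using \<theta> conj \<Psi>_normal_form that by (intro normal_form_map_mult) (simp_all add: iso_def)
  then have "\<Psi> \<in> iso G1 G2"
    using bij_\<Psi> by (auto simp: iso_def bij_betw_def intro!: homI)
  moreover have "\<Psi> ` \<iota>1 ` carrier A = \<iota>2 ` carrier A"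
  proof -
    have "\<Psi> (\<iota>1 a) = \<iota>2 (\<theta> a)" if "a \<in> carrier A" for a
      using \<Psi>_normal_form[OF that S1.n_pos] that bij_betw_apply[OF bij_\<theta>] by simp
    then have "\<Psi> ` \<iota>1 ` carrier A = \<iota>2 ` \<theta> ` carrier A"
      by (simp add: image_image cong: image_cong)
    also have "\<theta> ` carrier A = carrier A"
      using bij_\<theta> by (simp add: bij_betw_def)
    finally show ?thesis .
  qed
  moreover have "\<Psi> c1 = c2"
  proof -
    have "\<theta> \<one>\<^bsub>A\<^esub> = \<one>\<^bsub>A\<^esub>"
      using \<theta> by (simp add: iso_def hom_one S1.A.group_axioms)
    then show ?thesis
      using \<Psi>_normal_form[OF S1.A.one_closed, of "1 mod n"] S1.n_pos S1.c_closed S2.c_closed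
      by (simp add: S1.c_pow_mod S2.c_pow_mod del: Suc_0_mod_eq)
  qed
  ultimately show ?thesis
    by blast
qed

lemma iso_iff_conjugate:
  "(\<exists>\<Psi>. \<Psi> \<in> iso G1 G2 \<and> \<Psi> ` (\<iota>1 ` carrier A) = \<iota>2 ` carrier A \<and> \<Psi> c1 = c2) \<longleftrightarrow>
   (\<exists>\<theta>. \<theta> \<in> iso A A \<and>
      (\<forall>x\<in>carrier A. \<phi>2 x = \<theta> (\<phi>1 (inv_into (carrier A) \<theta> x)) \<and>
                      P2 x = P1 (inv_into (carrier A) \<theta> x)))"
  (is "?iso \<longleftrightarrow> ?conj")
proof
  assume ?iso
  then obtain \<theta> where "\<theta> \<in> iso A A" "\<And>x. x \<in> carrier A \<Longrightarrow> \<phi>2 (\<theta> x) = \<theta> (\<phi>1 x) \<and> P2 (\<theta> x) = P1 x"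
    using iso_imp_conjugate by blast
  moreover have "bij_betw \<theta> (carrier A) (carrier A)"
    using \<open>\<theta> \<in> iso A A\<close> by (simp add: iso_def)
  ultimately show ?conj
    by (intro exI[of _ \<theta>] conjI) (simp_all add: conjugate_by_inv_into_iff)
next
  assume ?conj
  then obtain \<theta> where "\<theta> \<in> iso A A"
    and "\<forall>x\<in>carrier A. \<phi>2 x = \<theta> (\<phi>1 (inv_into (carrier A) \<theta> x)) \<and> P2 x = P1 (inv_into (carrier A) \<theta> x)"
    by blast
  moreover have "bij_betw \<theta> (carrier A) (carrier A)"
    using \<open>\<theta> \<in> iso A A\<close> by (simp add: iso_def)
  ultimately show ?iso
    using conjugate_imp_iso by (simp add: conjugate_by_inv_into_iff)
qed

end

lemma skew_products_iso_iff_conjugate: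
  fixes A :: "('a, 'b) monoid_scheme"
    and G1 :: "('c, 'd) monoid_scheme" and G2 :: "('e, 'f) monoid_scheme"
  assumes "group A"
    and "skew_product A G1 \<iota>1 c1 n" "skew_relation A G1 \<iota>1 c1 n \<phi>1 P1"
    and "skew_product A G2 \<iota>2 c2 n" "skew_relation A G2 \<iota>2 c2 n \<phi>2 P2"
  shows "(\<exists>\<Psi>. \<Psi> \<in> iso G1 G2 \<and> \<Psi> ` (\<iota>1 ` carrier A) = \<iota>2 ` carrier A \<and> \<Psi> c1 = c2) \<longleftrightarrow>
   (\<exists>\<theta>. \<theta> \<in> iso A A \<and>
      (\<forall>x\<in>carrier A. \<phi>2 x = \<theta> (\<phi>1 (inv_into (carrier A) \<theta> x)) \<and>
                      P2 x = P1 (inv_into (carrier A) \<theta> x)))"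
proof -
  interpret skew_product_pair A G1 \<iota>1 c1 n \<phi>1 P1 G2 \<iota>2 c2 \<phi>2 P2
    using assms
    by (intro skew_product_pair.intro skew_product_relation.intro skew_product_groupI
        skew_product_relation_axioms.intro)
  show ?thesis
    by (rule iso_iff_conjugate)
qed

theorem theorem1p1:
  fixes A :: "('a, 'b) monoid_scheme"
  assumes "group A" and "finite (carrier A)"
  shows
  "(\<forall>(G :: ('g, 'h) monoid_scheme) \<iota> c n. skew_product A G \<iota> c n \<longrightarrow>
      (\<forall>x\<in>carrier A. \<exists>!p. fst p \<in> carrier A \<and> snd p < n \<and>
          c \<otimes>\<^bsub>G\<^esub> \<iota> x = \<iota> (fst p) \<otimes>\<^bsub>G\<^esub> c [^]\<^bsub>G\<^esub> snd p) \<and>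
      (\<forall>\<phi> P. skew_relation A G \<iota> c n \<phi> P \<longrightarrow>
          skew_morphism A \<phi> \<and> ext_power_function A \<phi> n P))
   \<and>
   (\<forall>\<phi> P n. skew_morphism A \<phi> \<and> ext_power_function A \<phi> n P \<longrightarrow>
      (\<exists>(G :: ('a \<times> nat) monoid) \<iota> c.
          skew_product A G \<iota> c n \<and> skew_relation A G \<iota> c n \<phi> P))
   \<and>
   (\<forall>\<phi>1 P1 \<phi>2 P2 n (G1 :: ('c, 'd) monoid_scheme) \<iota>1 c1 (G2 :: ('e, 'f) monoid_scheme) \<iota>2 c2.
      skew_morphism A \<phi>1 \<and> ext_power_function A \<phi>1 n P1 \<and>
      skew_morphism A \<phi>2 \<and> ext_power_function A \<phi>2 n P2 \<and>
      skew_product A G1 \<iota>1 c1 n \<and> skew_relation A G1 \<iota>1 c1 n \<phi>1 P1 \<and>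
      skew_product A G2 \<iota>2 c2 n \<and> skew_relation A G2 \<iota>2 c2 n \<phi>2 P2 \<longrightarrow>
      ((\<exists>\<Psi>. \<Psi> \<in> iso G1 G2 \<and> \<Psi> ` (\<iota>1 ` carrier A) = \<iota>2 ` carrier A \<and> \<Psi> c1 = c2)
       \<longleftrightarrow>
       (\<exists>\<theta>. \<theta> \<in> iso A A \<and>
          (\<forall>x\<in>carrier A. \<phi>2 x = \<theta> (\<phi>1 (inv_into (carrier A) \<theta> x)) \<and>
                          P2 x = P1 (inv_into (carrier A) \<theta> x)))))"
  by (intro conjI allI impI ballI; (elim conjE)?)
    (simp_all add: skew_product_ex1_normal_form skew_relation_imp_skew_morphism
      skew_product_from_ext_power_function skew_products_iso_iff_conjugate assms
      del: split_paired_Ex)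

end
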